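(* Let $G=(V,E)$ be a simple graph with $n\ge 2$ vertices and $|E|=2n-3$. Let $e\in E$, and let $G^*$ be the multigraph obtained from $G$ by adding a parallel copy $e_{add}$ of $e$. Suppose the edge set of $G^*$ is partitioned into two edge-disjoint spanning trees $T^r$ (red) and $T^b$ (black) with $e_{add}\in T^b$. Run the decomposition procedure on $(G^*,T^r,T^b)$. Then $G$ is a Laman graph if and only if every edge of $G^*$ is deleted by the time the procedure terminates.
   Context: A graph $G$ with $n$ vertices and $m$ edges is a Laman graph if $m=2n-3$ and, for every $k\ge 2$, every set of $k$ vertices induces at most $2k-3$ edges. Each edge of $G^*$ carries the color of the tree containing it. Decomposition procedure. Step 1 deletes $e_{add}$. For $i=2,3,\dots$, let $c_i$ be red if $i$ is even and black if $i$ is odd, and let $\bar c_i$ be the other color. Let $F$ be the set of not-yet-deleted edges of color $\bar c_i$. Step $i$ deletes, simultaneously, every not-yet-deleted edge of color $c_i$ whose two endpoints lie in different connected components of the graph $(V,F)$. The procedure terminates at the first step $i\ge 2$ in which no edge is deleted. *)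

theory Defs
  imports Main
begin

(* A multigraph is given by a set of edge identifiers Es and an endpoint map ends. *)

definition adj_rel :: "('e \<Rightarrow> 'a set) \<Rightarrow> 'e set \<Rightarrow> ('a \<times> 'a) set" where
  "adj_rel ends F = {(u, v). \<exists>f\<in>F. ends f = {u, v}}"

definition conn :: "('e \<Rightarrow> 'a set) \<Rightarrow> 'e set \<Rightarrow> 'a \<Rightarrow> 'a \<Rightarrow> bool" where
  "conn ends F u v \<longleftrightarrow> (u, v) \<in> (adj_rel ends F)\<^sup>*"

definition spanning_tree :: "'a set \<Rightarrow> ('e \<Rightarrow> 'a set) \<Rightarrow> 'e set \<Rightarrow> bool" where
  "spanning_tree V ends T \<longleftrightarrow>
     (\<forall>f\<in>T. ends f \<subseteq> V) \<and>
     (\<forall>u\<in>V. \<forall>v\<in>V. conn ends T u v) \<and>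
     (\<forall>f\<in>T. \<forall>u v. ends f = {u, v} \<longrightarrow> \<not> conn ends (T - {f}) u v)"

definition simple_graph :: "'a set \<Rightarrow> 'a set set \<Rightarrow> bool" where
  "simple_graph V E \<longleftrightarrow> finite V \<and> (\<forall>x\<in>E. \<exists>u v. u \<in> V \<and> v \<in> V \<and> u \<noteq> v \<and> x = {u, v})"

definition laman :: "'a set \<Rightarrow> 'a set set \<Rightarrow> bool" where
  "laman V E \<longleftrightarrow> card E = 2 * card V - 3 \<and>
     (\<forall>S \<subseteq> V. card S \<ge> 2 \<longrightarrow> card {x\<in>E. x \<subseteq> S} \<le> 2 * card S - 3)"

(* Step i \<ge> 2 of the decomposition procedure, given the set D of edges deleted so far.
   red f = True means f is red. c_i is red iff i is even; an edge f has colour c_i iff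
   red f = even i. *)
definition step_del :: "('e \<Rightarrow> 'a set) \<Rightarrow> 'e set \<Rightarrow> ('e \<Rightarrow> bool) \<Rightarrow> nat \<Rightarrow> 'e set \<Rightarrow> 'e set" where
  "step_del ends Es red i D =
     (let F = {g \<in> Es - D. red g \<noteq> even i}
      in {f \<in> Es - D. red f = even i \<and>
            (\<forall>u v. ends f = {u, v} \<longrightarrow> \<not> conn ends F u v)})"

fun deleted :: "('e \<Rightarrow> 'a set) \<Rightarrow> 'e set \<Rightarrow> ('e \<Rightarrow> bool) \<Rightarrow> 'e \<Rightarrow> nat \<Rightarrow> 'e set" where
  "deleted ends Es red eadd 0 = {}"
| "deleted ends Es red eadd (Suc 0) = {eadd}"
| "deleted ends Es red eadd (Suc (Suc k)) =
     deleted ends Es red eadd (Suc k) \<union> step_del ends Es red (Suc (Suc k)) (deleted ends Es red eadd (Suc k))"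

definition all_deleted_at_termination :: "('e \<Rightarrow> 'a set) \<Rightarrow> 'e set \<Rightarrow> ('e \<Rightarrow> bool) \<Rightarrow> 'e \<Rightarrow> bool" where
  "all_deleted_at_termination ends Es red eadd \<longleftrightarrow>
     (\<exists>k\<ge>2. step_del ends Es red k (deleted ends Es red eadd (k - 1)) = {} \<and>
            (\<forall>j. 2 \<le> j \<and> j < k \<longrightarrow> step_del ends Es red j (deleted ends Es red eadd (j - 1)) \<noteq> {}) \<and>
            deleted ends Es red eadd k = Es)"

end

theory Submission
  imports Defs
begin

(* Call a set F of coloured edges balanced if the endpoints of every edge of F
   are joined by a path of edges of F of the other colour.  Two facts about the procedure
   drive the proof:
   (1) a balanced set of edges that does not contain e_add is never deleted, because at
       every step its other-coloured edges are still present and connect each of its edges;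
   (2) at the first idle step the surviving edges form a balanced set.
   Two counting facts translate balancedness into density: a set of at least 2|S| - 2
   edges on a vertex set S that splits into a red and a black forest is balanced (both
   forests are spanning trees of S), and a nonempty balanced set contains a component P
   spanned by both colours, hence at least 2|P| - 2 edges inside P.  So the procedure
   deletes everything exactly when no vertex set S induces 2|S| - 2 edges of G, i.e. when
   G is Laman. *)

lemma adj_rel_sym: "sym (adj_rel en F)"
  unfolding adj_rel_def sym_def by (auto simp: insert_commute)

lemma conn_refl [simp]: "conn en F u u"
  by (simp add: conn_def)

lemma conn_sym: "conn en F u v \<Longrightarrow> conn en F v u"
  unfolding conn_def by (rule symD[OF sym_rtrancl[OF adj_rel_sym]])

lemma conn_trans: "conn en F u v \<Longrightarrow> conn en F v w \<Longrightarrow> conn en F u w"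
  unfolding conn_def by (rule rtrancl_trans)

lemma conn_edge: "f \<in> F \<Longrightarrow> en f = {u, v} \<Longrightarrow> conn en F u v"
  unfolding conn_def adj_rel_def by (rule r_into_rtrancl) auto

lemma conn_empty: "conn en {} u v \<longleftrightarrow> u = v"
  unfolding conn_def adj_rel_def by simp

lemma conn_transfer:
  assumes "\<forall>g\<in>F. \<forall>u v. en g = {u, v} \<longrightarrow> conn en F' u v" "conn en F x y"
  shows "conn en F' x y"
proof -
  have "adj_rel en F \<subseteq> (adj_rel en F')\<^sup>*"
    using assms(1) unfolding adj_rel_def conn_def by auto
  then show ?thesis
    using assms(2) rtrancl_subset_rtrancl unfolding conn_def by blast
qed

lemma conn_mono: "F \<subseteq> F' \<Longrightarrow> conn en F u v \<Longrightarrow> conn en F' u v"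
  by (rule conn_transfer) (auto intro: conn_edge)

lemma conn_within:
  assumes "\<forall>f\<in>F. en f \<subseteq> S" "conn en F u v" "u \<in> S"
  shows "v \<in> S"
  using assms(2,3) unfolding conn_def
proof (induction rule: rtrancl_induct)
  case (step y z)
  then obtain f where "f \<in> F" "en f = {y, z}" unfolding adj_rel_def by auto
  then show ?case using assms(1) step.IH by auto
qed

lemma conn_restrict_component:
  assumes "conn en F a v"
  shows "conn en {g\<in>F. en g \<subseteq> {w. conn en F a w}} a v"
proof -
  have "(a, v) \<in> (adj_rel en F)\<^sup>*"
    using assms unfolding conn_def .
  then show ?thesis
  proof (induction rule: rtrancl_induct)
    case (step y z)
    then obtain g where g: "g \<in> F" "en g = {y, z}"
      unfolding adj_rel_def by auto
    have ay: "conn en F a y"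
      using step.hyps(1) unfolding conn_def .
    have az: "conn en F a z"
      using conn_trans[OF ay conn_edge[of g F en y z, OF g]] .
    have "g \<in> {g\<in>F. en g \<subseteq> {w. conn en F a w}}"
      using g ay az by auto
    then have "conn en {g\<in>F. en g \<subseteq> {w. conn en F a w}} y z"
      using g(2) by (rule conn_edge)
    then show ?case using step.IH by (rule conn_trans[rotated])
  qed simp
qed

lemma conn_insert:
  assumes "en f = {a, b}"
  shows "conn en (insert f F) x y \<longleftrightarrow>
    conn en F x y \<or> (conn en F x a \<and> conn en F b y) \<or> (conn en F x b \<and> conn en F a y)"
proof
  assume "conn en F x y \<or> (conn en F x a \<and> conn en F b y) \<or> (conn en F x b \<and> conn en F a y)"
  moreover have "conn en (insert f F) a b" "conn en (insert f F) b a"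
    using assms by (auto intro: conn_edge simp: insert_commute)
  moreover have "\<And>u v. conn en F u v \<Longrightarrow> conn en (insert f F) u v"
    by (rule conn_mono) auto
  ultimately show "conn en (insert f F) x y"
    by (meson conn_trans)
next
  assume "conn en (insert f F) x y"
  then show "conn en F x y \<or> (conn en F x a \<and> conn en F b y) \<or> (conn en F x b \<and> conn en F a y)"
    unfolding conn_def[of en "insert f F"]
  proof (induction rule: rtrancl_induct)
    case (step y z)
    then obtain g where g: "g \<in> insert f F" "en g = {y, z}"
      unfolding adj_rel_def by auto
    show ?case
    proof (cases "g \<in> F")
      case True
      then have "conn en F y z" using g(2) by (rule conn_edge)
      then show ?thesis using step.IH conn_trans by metis
    next
      case False
      then have "(y = a \<and> z = b) \<or> (y = b \<and> z = a)"
        using g assms by (auto simp: doubleton_eq_iff)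
      then show ?thesis using step.IH conn_trans conn_sym conn_refl by metis
    qed
  qed simp
qed

lemma conn_insert_redundant:
  assumes "en f = {a, b}" "conn en F a b"
  shows "conn en (insert f F) x y \<longleftrightarrow> conn en F x y"
proof -
  have "conn en F x a \<and> conn en F b y \<Longrightarrow> conn en F x y"
    by (meson assms(2) conn_trans)
  moreover have "conn en F x b \<and> conn en F a y \<Longrightarrow> conn en F x y"
    by (meson conn_sym[OF assms(2)] conn_trans)
  ultimately show ?thesis using conn_insert[of en f a b F x y, OF assms(1)] by blast
qed

definition component :: "('e \<Rightarrow> 'a set) \<Rightarrow> 'e set \<Rightarrow> 'a set \<Rightarrow> 'a \<Rightarrow> 'a set" where
  "component en F S u = {v\<in>S. conn en F u v}"

definition components :: "('e \<Rightarrow> 'a set) \<Rightarrow> 'e set \<Rightarrow> 'a set \<Rightarrow> 'a set set" where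
  "components en F S = component en F S ` S"

definition forest :: "('e \<Rightarrow> 'a set) \<Rightarrow> 'e set \<Rightarrow> bool" where
  "forest en F \<longleftrightarrow> (\<forall>f\<in>F. \<forall>u v. en f = {u, v} \<longrightarrow> \<not> conn en (F - {f}) u v)"

lemma component_eq:
  assumes "conn en F x y"
  shows "component en F S x = component en F S y"
proof -
  have "conn en F x v \<longleftrightarrow> conn en F y v" for v
    using conn_trans[OF assms] conn_trans[OF conn_sym[OF assms]] by blast
  then show ?thesis unfolding component_def by simp
qed

lemma component_insert:
  assumes "en f = {a, b}"
  shows "component en (insert f F) S x =
    (if conn en F x a \<or> conn en F x b then component en F S a \<union> component en F S b
     else component en F S x)"
proof (cases "conn en F x a \<or> conn en F x b")
  case True
  then have "conn en (insert f F) x v \<longleftrightarrow> conn en F a v \<or> conn en F b v" for v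
    unfolding conn_insert[of en f a b, OF assms] using conn_sym conn_trans by meson
  then show ?thesis using True unfolding component_def by auto
next
  case False
  then have "conn en (insert f F) x v \<longleftrightarrow> conn en F x v" for v
    unfolding conn_insert[of en f a b, OF assms] by blast
  then show ?thesis using False unfolding component_def by auto
qed

lemma components_insert:
  assumes ab: "en f = {a, b}" "a \<in> S" "b \<in> S" "\<not> conn en F a b"
  defines "A \<equiv> component en F S a" and "B \<equiv> component en F S b"
  shows "components en (insert f F) S = insert (A \<union> B) (components en F S - {A, B})"
proof -
  note ins = component_insert[of en f a b F, OF ab(1)]
  have other: "component en F S x \<notin> {A, B}"
    if "x \<in> S" "\<not> conn en F x a" "\<not> conn en F x b" for x
  proof -
    have "x \<in> component en F S x" using that(1) by (simp add: component_def)
    moreover have "x \<notin> A" "x \<notin> B"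
      using that conn_sym[of en F a x] conn_sym[of en F b x]
      unfolding A_def B_def component_def by auto
    ultimately show ?thesis by auto
  qed
  have merged: "component en (insert f F) S x = A \<union> B"
    if "conn en F x a \<or> conn en F x b" for x
    using ins[of S x] that unfolding A_def B_def by simp
  have kept: "component en (insert f F) S x = component en F S x"
    if "\<not> conn en F x a" "\<not> conn en F x b" for x
    using ins[of S x] that by simp
  have "C \<in> components en (insert f F) S" if C: "C \<in> components en F S - {A, B}" for C
  proof -
    obtain x where x: "x \<in> S" "C = component en F S x"
      using C unfolding components_def by auto
    then have "\<not> conn en F x a" "\<not> conn en F x b"
      using C component_eq[of en F x a S] component_eq[of en F x b S] unfolding A_def B_def by auto
    then show ?thesis using x kept unfolding components_def by auto
  qed
  moreover have "A \<union> B \<in> components en (insert f F) S"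
    using merged[of a] ab(2) unfolding components_def by (metis conn_refl image_eqI)
  moreover have "C \<in> insert (A \<union> B) (components en F S - {A, B})"
    if C: "C \<in> components en (insert f F) S" for C
  proof -
    obtain x where x: "x \<in> S" "C = component en (insert f F) S x"
      using C unfolding components_def by auto
    show ?thesis
    proof (cases "conn en F x a \<or> conn en F x b")
      case True
      then show ?thesis using x(2) merged by simp
    next
      case False
      then show ?thesis using x kept other unfolding components_def by auto
    qed
  qed
  ultimately show ?thesis by blast
qed

lemma card_components_insert:
  assumes "finite S" "en f = {a, b}" "a \<in> S" "b \<in> S" "\<not> conn en F a b"
  shows "card (components en (insert f F) S) + 1 = card (components en F S)"
proof -
  define A where "A = component en F S a"
  define B where "B = component en F S b"
  have AB: "A \<in> components en F S" "B \<in> components en F S"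
    using assms(3,4) unfolding A_def B_def components_def by auto
  have "b \<in> B" "b \<notin> A"
    using assms(4,5) unfolding A_def B_def component_def by auto
  then have "A \<noteq> B" by auto
  have new: "A \<union> B \<notin> components en F S - {A, B}"
  proof
    assume "A \<union> B \<in> components en F S - {A, B}"
    then obtain x where x: "A \<union> B = component en F S x" "component en F S x \<noteq> A"
      unfolding components_def by auto
    have "a \<in> A" using assms(3) unfolding A_def component_def by simp
    then have "conn en F x a" using x(1) unfolding component_def by auto
    then show False using x(2) component_eq[of en F x a S] unfolding A_def by simp
  qed
  have fin: "finite (components en F S)"
    using assms(1) unfolding components_def by simp
  have "card (components en (insert f F) S) = card (components en F S - {A, B}) + 1"
    using components_insert[OF assms(2-5)] new fin unfolding A_def B_def by simp
  also have "\<dots> = card (components en F S) - 2 + 1"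
    using AB \<open>A \<noteq> B\<close> fin by (simp add: card_Diff_subset)
  finally show ?thesis
    using AB \<open>A \<noteq> B\<close> fin card_mono[OF fin, of "{A, B}"] by simp
qed

lemma forest_mono:
  assumes "forest en T" "F \<subseteq> T"
  shows "forest en F"
  unfolding forest_def
proof (intro ballI allI impI notI)
  fix f u v
  assume f: "f \<in> F" "en f = {u, v}" "conn en (F - {f}) u v"
  have "F - {f} \<subseteq> T - {f}" using assms(2) by blast
  then have "conn en (T - {f}) u v" using f(3) by (rule conn_mono)
  then show False using assms f(1,2) unfolding forest_def by blast
qed

lemma edge_count:
  assumes "finite F" "finite S" "\<forall>f\<in>F. en f \<subseteq> S" "\<forall>f\<in>F. \<exists>u v. en f = {u, v}"
  shows "card S \<le> card F + card (components en F S)"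
    and "forest en F \<Longrightarrow> card S = card F + card (components en F S)"
proof -
  have "card S \<le> card F + card (components en F S) \<and>
    (forest en F \<longrightarrow> card S = card F + card (components en F S))"
    using assms
  proof (induction F rule: finite_induct)
    case empty
    have "components en {} S = (\<lambda>u. {u}) ` S"
      unfolding components_def component_def conn_empty using assms(2) by auto
    then show ?case by (simp add: card_image)
  next
    case (insert f F)
    obtain a b where ab: "en f = {a, b}" using insert.prems by auto
    have abS: "a \<in> S" "b \<in> S" using ab insert.prems by auto
    have IH: "card S \<le> card F + card (components en F S)"
      "forest en F \<Longrightarrow> card S = card F + card (components en F S)"
      using insert by auto
    have card_ins: "card (insert f F) = card F + 1" using insert.hyps by simp
    show ?case
    proof (cases "conn en F a b")
      case True
      then have "components en (insert f F) S = components en F S"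
        unfolding components_def component_def conn_insert_redundant[of en f a b F, OF ab True] by simp
      moreover have "\<not> forest en (insert f F)"
        using True ab insert.hyps(2) unfolding forest_def by auto
      ultimately show ?thesis using IH card_ins by simp
    next
      case False
      then have "card (components en (insert f F) S) + 1 = card (components en F S)"
        using card_components_insert[of S en f a b F, OF assms(2) ab abS] by blast
      moreover have "forest en (insert f F) \<Longrightarrow> forest en F"
        by (erule forest_mono) auto
      ultimately show ?thesis using IH card_ins by auto
    qed
  qed
  then show "card S \<le> card F + card (components en F S)"
    and "forest en F \<Longrightarrow> card S = card F + card (components en F S)"
    by auto
qed

lemma components_nonempty: "finite S \<Longrightarrow> S \<noteq> {} \<Longrightarrow> 1 \<le> card (components en F S)"
  unfolding components_def by (simp add: Suc_leI card_gt_0_iff)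

lemma forest_size:
  assumes "finite F" "finite S" "\<forall>f\<in>F. en f \<subseteq> S" "\<forall>f\<in>F. \<exists>u v. en f = {u, v}"
    "forest en F" "S \<noteq> {}"
  shows "card F + 1 \<le> card S"
  using edge_count(2)[OF assms(1-5)] components_nonempty[OF assms(2,6)] by simp

lemma forest_spans:
  assumes "finite F" "finite S" "\<forall>f\<in>F. en f \<subseteq> S" "\<forall>f\<in>F. \<exists>u v. en f = {u, v}"
    "forest en F" "card S \<le> card F + 1" "u \<in> S" "v \<in> S"
  shows "conn en F u v"
proof -
  have "S \<noteq> {}" using assms(7) by auto
  then have "card (components en F S) = 1"
    using edge_count(2)[OF assms(1-5)] components_nonempty[OF assms(2), of en F] assms(6)
    by linarith
  then obtain C where C: "components en F S = {C}" using card_1_singletonE by blast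
  have "component en F S w = C" if "w \<in> S" for w
  proof -
    have "component en F S w \<in> components en F S"
      unfolding components_def using that by (rule imageI)
    then show ?thesis using C by simp
  qed
  moreover have "v \<in> component en F S v"
    using assms(8) unfolding component_def by simp
  ultimately have "v \<in> component en F S u"
    using assms(7,8) by simp
  then show ?thesis unfolding component_def by simp
qed

lemma component_size:
  assumes "finite F" "\<forall>f\<in>F. \<exists>u v. en f = {u, v}" "finite {w. conn en F a w}"
  defines "P \<equiv> {w. conn en F a w}"
  shows "card P \<le> card {g\<in>F. en g \<subseteq> P} + 1"
proof -
  let ?FP = "{g\<in>F. en g \<subseteq> P}"
  have all: "conn en ?FP a v" if "v \<in> P" for v
  proof -
    have "conn en F a v" using that unfolding P_def by simp
    then show ?thesis unfolding P_def by (rule conn_restrict_component)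
  qed
  have "component en ?FP P u = component en ?FP P a" if "u \<in> P" for u
    using component_eq[OF conn_sym[OF all[OF that]]] .
  moreover have "a \<in> P" unfolding P_def by simp
  ultimately have "components en ?FP P = {component en ?FP P a}"
    unfolding components_def by blast
  moreover have "card P \<le> card ?FP + card (components en ?FP P)"
    by (rule edge_count(1)) (use assms in \<open>auto simp: P_def\<close>)
  ultimately show ?thesis by simp
qed

definition balanced :: "('e \<Rightarrow> 'a set) \<Rightarrow> ('e \<Rightarrow> bool) \<Rightarrow> 'e set \<Rightarrow> bool" where
  "balanced en col F \<longleftrightarrow>
     (\<forall>g\<in>F. \<forall>u v. en g = {u, v} \<longrightarrow> conn en {h\<in>F. col h \<noteq> col g} u v)"

(* A red forest and a black forest on S with 2|S| - 2 edges in total are both spanning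
   trees of S; in particular their union is balanced. *)
lemma dense_forests_balanced:
  fixes col :: "'e \<Rightarrow> bool"
  assumes fin: "finite F" "finite S" and "S \<noteq> {}"
    and ends: "\<forall>f\<in>F. en f \<subseteq> S" "\<forall>f\<in>F. \<exists>u v. en f = {u, v}"
    and forests: "forest en {f\<in>F. col f}" "forest en {f\<in>F. \<not> col f}"
    and dense: "2 * card S \<le> card F + 2"
  shows "balanced en col F"
proof -
  let ?R = "{f\<in>F. col f}" and ?B = "{f\<in>F. \<not> col f}"
  have "card F = card ?R + card ?B"
    using fin(1) by (subst card_Un_disjoint[symmetric]) (auto intro: arg_cong[where f = card])
  moreover have "card ?R + 1 \<le> card S" "card ?B + 1 \<le> card S"
    using forest_size[of ?R S en] forest_size[of ?B S en] assms by auto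
  ultimately have "card S \<le> card ?R + 1" "card S \<le> card ?B + 1"
    using dense by linarith+
  then have span: "conn en ?R u v" "conn en ?B u v" if "u \<in> S" "v \<in> S" for u v
    using forest_spans[of ?R S en] forest_spans[of ?B S en] assms that by auto
  then show ?thesis
    unfolding balanced_def
  proof (intro ballI allI impI)
    fix g u v
    assume "g \<in> F" "en g = {u, v}"
    then have "u \<in> S" "v \<in> S" using ends(1) by auto
    then show "conn en {h\<in>F. col h \<noteq> col g} u v"
      using span by (cases "col g") auto
  qed
qed

lemma balanced_same_conn:
  fixes col :: "'e \<Rightarrow> bool"
  assumes bal: "balanced en col U"
  shows "conn en {h\<in>U. col h} p q \<longleftrightarrow> conn en {h\<in>U. \<not> col h} p q"
proof -
  let ?R = "{h\<in>U. col h}" and ?B = "{h\<in>U. \<not> col h}"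
  have other: "conn en (if col g then ?B else ?R) u v" if "g \<in> U" "en g = {u, v}" for g u v
  proof -
    have "conn en {h\<in>U. col h \<noteq> col g} u v"
      using bal that unfolding balanced_def by blast
    moreover have "{h\<in>U. col h \<noteq> col g} = (if col g then ?B else ?R)"
      by auto
    ultimately show ?thesis by simp
  qed
  show ?thesis
  proof
    assume "conn en ?R p q"
    then show "conn en ?B p q"
    proof (rule conn_transfer[rotated], intro ballI allI impI)
      fix g u v assume "g \<in> ?R" "en g = {u, v}"
      then show "conn en ?B u v" using other[of g u v] by simp
    qed
  next
    assume "conn en ?B p q"
    then show "conn en ?R p q"
    proof (rule conn_transfer[rotated], intro ballI allI impI)
      fix g u v assume "g \<in> ?B" "en g = {u, v}"
      then show "conn en ?R u v" using other[of g u v] by simp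
    qed
  qed
qed

(* Conversely, a nonempty balanced set is dense somewhere: the component P (in either
   colour) of the endpoints of one of its edges is spanned by both colours, so P contains
   at least 2|P| - 2 edges. *)
lemma balanced_contains_dense:
  fixes col :: "'e \<Rightarrow> bool"
  assumes fin: "finite U" "finite V"
    and ends: "\<forall>g\<in>U. en g \<subseteq> V" "\<forall>g\<in>U. \<exists>u v. u \<noteq> v \<and> en g = {u, v}"
    and bal: "balanced en col U" and "x \<in> U"
  shows "\<exists>P\<subseteq>V. 2 \<le> card P \<and> 2 * card P \<le> card {g\<in>U. en g \<subseteq> P} + 2"
proof -
  let ?R = "{h\<in>U. col h}" and ?B = "{h\<in>U. \<not> col h}"
  have same: "{w. conn en ?R a w} = {w. conn en ?B a w}" for a
    using balanced_same_conn[OF bal] by blast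
  obtain a b where ab: "a \<noteq> b" "en x = {a, b}"
    using ends(2) assms(6) by blast
  have "conn en ?R a b"
  proof (cases "col x")
    case True
    then show ?thesis using ab(2) assms(6) by (intro conn_edge) auto
  next
    case False
    then have "conn en ?B a b" using ab(2) assms(6) by (intro conn_edge) auto
    then show ?thesis using balanced_same_conn[OF bal] by blast
  qed
  define P where "P = {w. conn en ?R a w}"
  have "a \<in> V" using ends(1) ab(2) assms(6) by auto
  have "P \<subseteq> V"
  proof
    fix w assume "w \<in> P"
    then have "conn en ?R a w" unfolding P_def by simp
    moreover have "\<forall>f\<in>?R. en f \<subseteq> V" using ends(1) by auto
    ultimately show "w \<in> V" using conn_within[of ?R en V a w] \<open>a \<in> V\<close> by blast
  qed
  then have finP: "finite P" using fin(2) finite_subset by blast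
  have "a \<in> P" "b \<in> P" unfolding P_def using \<open>conn en ?R a b\<close> by auto
  then have "card {a, b} \<le> card P" using finP by (intro card_mono) auto
  then have "2 \<le> card P" using ab(1) by simp
  have "finite ?R" "finite ?B" using fin(1) by auto
  moreover have "\<forall>f\<in>?R. \<exists>u v. en f = {u, v}" "\<forall>f\<in>?B. \<exists>u v. en f = {u, v}"
    using ends(2) by blast+
  moreover have "finite {w. conn en ?R a w}" "finite {w. conn en ?B a w}"
    using finP same[of a] unfolding P_def by simp_all
  ultimately have "card P \<le> card {g\<in>?R. en g \<subseteq> P} + 1" "card P \<le> card {g\<in>?B. en g \<subseteq> P} + 1"
    using component_size[of ?R en a] component_size[of ?B en a] same[of a] unfolding P_def
    by simp_all
  moreover have "card {g\<in>?R. en g \<subseteq> P} + card {g\<in>?B. en g \<subseteq> P} = card {g\<in>U. en g \<subseteq> P}"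
    using fin(1) by (subst card_Un_disjoint[symmetric]) (auto intro: arg_cong[where f = card])
  ultimately show ?thesis
    using \<open>P \<subseteq> V\<close> \<open>2 \<le> card P\<close> by (intro exI[of _ P]) auto
qed

lemma step_del_subset: "step_del en Es red i D \<subseteq> Es - D"
  unfolding step_del_def Let_def by auto

lemma step_del_colour: "f \<in> step_del en Es red i D \<Longrightarrow> red f = even i"
  unfolding step_del_def Let_def by auto

lemma deleted_subset: "eadd \<in> Es \<Longrightarrow> deleted en Es red eadd n \<subseteq> Es"
proof (induction en Es red eadd n rule: deleted.induct)
  case (3 en Es red eadd k)
  then show ?case using step_del_subset[of en Es red "Suc (Suc k)"] by auto
qed auto

lemma eadd_deleted: "1 \<le> n \<Longrightarrow> eadd \<in> deleted en Es red eadd n"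
  by (induction en Es red eadd n rule: deleted.induct) auto

lemma deleted_step:
  assumes "2 \<le> j"
  shows "deleted en Es red eadd j =
    deleted en Es red eadd (j - 1) \<union> step_del en Es red j (deleted en Es red eadd (j - 1))"
proof -
  obtain k where "j = Suc (Suc k)" using assms by (metis add_2_eq_Suc le_Suc_ex)
  then show ?thesis by simp
qed

lemma kept_edge_connected:
  assumes "g \<in> Es - D" "red g = even i" "g \<notin> step_del en Es red i D" "en g = {u, v}"
  shows "conn en {h\<in>Es - D. red h \<noteq> even i} u v"
proof -
  let ?F = "{h\<in>Es - D. red h \<noteq> even i}"
  obtain u' v' where uv: "en g = {u', v'}" "conn en ?F u' v'"
    using assms(1-3) unfolding step_del_def Let_def by auto
  then have "(u = u' \<and> v = v') \<or> (u = v' \<and> v = u')"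
    using assms(4) by (auto simp: doubleton_eq_iff)
  then show ?thesis using uv(2) conn_sym[of en ?F u' v'] by auto
qed

lemma busy_steps_delete:
  assumes "finite Es" "eadd \<in> Es"
    and busy: "\<forall>m<n. step_del en Es red (Suc (Suc m)) (deleted en Es red eadd (Suc m)) \<noteq> {}"
  shows "Suc n \<le> card (deleted en Es red eadd (Suc n))"
  using busy
proof (induction n)
  case (Suc n)
  let ?D = "deleted en Es red eadd (Suc n)"
  let ?s = "step_del en Es red (Suc (Suc n)) ?D"
  have "finite ?D" "finite ?s"
    using deleted_subset[OF assms(2)] step_del_subset assms(1) by (meson finite_subset finite_Diff)+
  moreover have "?D \<inter> ?s = {}" using step_del_subset[of en Es red "Suc (Suc n)" ?D] by blast
  ultimately have "card (?D \<union> ?s) = card ?D + card ?s"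
    by (rule card_Un_disjoint)
  moreover have "0 < card ?s" using \<open>finite ?s\<close> Suc.prems by (simp add: card_gt_0_iff)
  moreover have "Suc n \<le> card ?D" using Suc by simp
  ultimately show ?case by simp
qed (use assms(2) in simp)

(* Since every busy step deletes an edge, some step is idle; take the first one. *)
lemma first_idle_step:
  assumes "finite Es" "eadd \<in> Es"
  shows "\<exists>k\<ge>2. step_del en Es red k (deleted en Es red eadd (k - 1)) = {} \<and>
    (\<forall>j. 2 \<le> j \<and> j < k \<longrightarrow> step_del en Es red j (deleted en Es red eadd (j - 1)) \<noteq> {})"
proof -
  let ?idle = "\<lambda>j. 2 \<le> j \<and> step_del en Es red j (deleted en Es red eadd (j - 1)) = {}"
  have "\<exists>j. ?idle j"
  proof (rule ccontr)
    assume "\<nexists>j. ?idle j"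
    then have "\<not> ?idle (Suc (Suc m))" for m
      by blast
    then have "Suc (card Es) \<le> card (deleted en Es red eadd (Suc (card Es)))"
      using busy_steps_delete[OF assms, of "card Es" en red] by simp
    moreover have "card (deleted en Es red eadd (Suc (card Es))) \<le> card Es"
      using deleted_subset[OF assms(2)] assms(1) by (rule card_mono[rotated])
    ultimately show False by simp
  qed
  define k where "k = (LEAST j. ?idle j)"
  have "?idle k"
    unfolding k_def using \<open>\<exists>j. ?idle j\<close> by (rule LeastI_ex)
  moreover have "\<not> ?idle j" if "j < k" for j
    using not_less_Least[of j ?idle] that unfolding k_def by blast
  ultimately show ?thesis by (intro exI[of _ k]) auto
qed

(* After step j >= 2, every remaining edge of colour c_j has its endpoints connected by the
   remaining edges of the other colour, since step j deletes only edges of colour c_j. *)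
lemma survived_step_connected:
  assumes "2 \<le> j" "g \<in> Es - deleted en Es red eadd j" "red g = even j" "en g = {u, v}"
  shows "conn en {h\<in>Es - deleted en Es red eadd j. red h \<noteq> red g} u v"
proof -
  let ?D = "deleted en Es red eadd (j - 1)"
  have Dj: "deleted en Es red eadd j = ?D \<union> step_del en Es red j ?D"
    by (rule deleted_step[OF assms(1)])
  have "conn en {h\<in>Es - ?D. red h \<noteq> even j} u v"
    using kept_edge_connected[of g Es ?D red j en u v] assms(2-4) Dj by simp
  moreover have "{h\<in>Es - ?D. red h \<noteq> even j} = {h\<in>Es - deleted en Es red eadd j. red h \<noteq> red g}"
    using Dj assms(3) step_del_colour[of _ en Es red j ?D] by auto
  ultimately show ?thesis by simp
qed

(* At the first idle step k the surviving edges are balanced: edges of colour c_k survived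
   step k, edges of colour c_(k-1) survived step k - 1 and the idle step k changes nothing,
   and for k = 2 the black edges are spanned by the whole red tree. *)
lemma residual_balanced:
  assumes "2 \<le> k" and idle: "step_del en Es red k (deleted en Es red eadd (k - 1)) = {}"
    and "\<not> red eadd" "\<forall>x\<in>Es. en x \<subseteq> V"
    and red_spans: "\<forall>u\<in>V. \<forall>v\<in>V. conn en {x\<in>Es. red x} u v"
  shows "balanced en red (Es - deleted en Es red eadd k)"
  unfolding balanced_def
proof (intro ballI allI impI)
  let ?D = "deleted en Es red eadd"
  fix g u v
  assume g: "g \<in> Es - ?D k" "en g = {u, v}"
  have "?D k = ?D (k - 1) \<union> step_del en Es red k (?D (k - 1))"
    by (rule deleted_step[OF assms(1)])
  then have Dk: "?D k = ?D (k - 1)"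
    using idle by simp
  consider "red g = even k" | "red g \<noteq> even k" "k = 2" | "red g = even (k - 1)" "3 \<le> k"
    using assms(1) by fastforce
  then show "conn en {h\<in>Es - ?D k. red h \<noteq> red g} u v"
  proof cases
    case 1
    then show ?thesis using survived_step_connected[OF assms(1) g(1) _ g(2)] by simp
  next
    case 2
    then have "{h\<in>Es - ?D k. red h \<noteq> red g} = {x\<in>Es. red x}"
      using Dk assms(3) by (auto simp: numeral_2_eq_2)
    moreover have "u \<in> V" "v \<in> V" using assms(4) g by auto
    ultimately show ?thesis using red_spans by simp
  next
    case 3
    then show ?thesis
      using survived_step_connected[of "k - 1" g Es en red eadd u v] g Dk by simp
  qed
qed

lemma balanced_never_deleted:
  assumes bal: "balanced en red F" and "F \<subseteq> Es" "eadd \<notin> F"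
    and ends: "\<forall>f\<in>F. \<exists>u v. en f = {u, v}"
  shows "deleted en Es red eadd n \<inter> F = {}"
proof (induction n)
  case (Suc n)
  show ?case
  proof (cases "n = 0")
    case False
    then obtain m where m: "n = Suc m" using not0_implies_Suc by blast
    let ?D = "deleted en Es red eadd n" and ?i = "Suc n"
    have "f \<notin> step_del en Es red ?i ?D" if f: "f \<in> F" for f
    proof
      assume del: "f \<in> step_del en Es red ?i ?D"
      obtain u v where uv: "en f = {u, v}" using ends f by auto
      have "{h\<in>F. red h \<noteq> red f} \<subseteq> {g\<in>Es - ?D. red g \<noteq> even ?i}"
        using Suc.IH \<open>F \<subseteq> Es\<close> step_del_colour[OF del] by auto
      moreover have "conn en {h\<in>F. red h \<noteq> red f} u v"
        using bal f uv unfolding balanced_def by blast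
      ultimately have "conn en {g\<in>Es - ?D. red g \<noteq> even ?i} u v"
        by (rule conn_mono)
      moreover have "\<not> conn en {g\<in>Es - ?D. red g \<noteq> even ?i} u v"
        using del uv unfolding step_del_def Let_def by simp
      ultimately show False by contradiction
    qed
    then show ?thesis using Suc.IH m by auto
  qed (use assms in simp)
qed simp

(* If no vertex set P induces more than 2|P| - 3 edges other than e_add, the surviving
   edges at termination would be a nonempty balanced, hence dense, set: so all edges go. *)
lemma sparse_imp_all_deleted:
  assumes "finite V" "finite Es" "eadd \<in> Es" "\<not> red eadd"
    and ends: "\<forall>x\<in>Es. \<exists>u v. u \<noteq> v \<and> en x = {u, v}" "\<forall>x\<in>Es. en x \<subseteq> V"
    and red_spans: "\<forall>u\<in>V. \<forall>v\<in>V. conn en {x\<in>Es. red x} u v"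
    and sparse: "\<forall>P\<subseteq>V. 2 \<le> card P \<longrightarrow> card {x\<in>Es - {eadd}. en x \<subseteq> P} \<le> 2 * card P - 3"
  shows "all_deleted_at_termination en Es red eadd"
proof -
  obtain k where k: "2 \<le> k" "step_del en Es red k (deleted en Es red eadd (k - 1)) = {}"
    "\<forall>j. 2 \<le> j \<and> j < k \<longrightarrow> step_del en Es red j (deleted en Es red eadd (j - 1)) \<noteq> {}"
    using first_idle_step[where en = en and red = red, OF assms(2,3)] by blast
  let ?U = "Es - deleted en Es red eadd k"
  have "?U = {}"
  proof (rule ccontr)
    assume "?U \<noteq> {}"
    then obtain x where "x \<in> ?U" by blast
    have "balanced en red ?U"
      using residual_balanced[OF k(1,2) assms(4) ends(2) red_spans] .
    moreover have "finite ?U" using assms(2) by simp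
    moreover have "\<forall>g\<in>?U. en g \<subseteq> V" "\<forall>g\<in>?U. \<exists>u v. u \<noteq> v \<and> en g = {u, v}"
      using ends by auto
    ultimately obtain P where P: "P \<subseteq> V" "2 \<le> card P"
      "2 * card P \<le> card {g\<in>?U. en g \<subseteq> P} + 2"
      using balanced_contains_dense[of ?U V en red x] assms(1) \<open>x \<in> ?U\<close> by blast
    have "eadd \<in> deleted en Es red eadd k" using k(1) by (intro eadd_deleted) simp
    then have "{g\<in>?U. en g \<subseteq> P} \<subseteq> {x\<in>Es - {eadd}. en x \<subseteq> P}" by blast
    then have "card {g\<in>?U. en g \<subseteq> P} \<le> card {x\<in>Es - {eadd}. en x \<subseteq> P}"
      by (rule card_mono[rotated]) (use assms(2) in simp)
    moreover have "card {x\<in>Es - {eadd}. en x \<subseteq> P} \<le> 2 * card P - 3"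
      using sparse P(1,2) by blast
    ultimately show False using P(2,3) by linarith
  qed
  then have "deleted en Es red eadd k = Es"
    using deleted_subset[OF assms(3), where en = en and red = red and n = k] by blast
  then show ?thesis
    unfolding all_deleted_at_termination_def using k by blast
qed

(* If some S induces 2|S| - 2 edges other than e_add, these form a balanced set that is
   never deleted. *)
lemma all_deleted_imp_sparse:
  assumes "finite Es" and ends: "\<forall>x\<in>Es. \<exists>u v. en x = {u, v}"
    and forests: "forest en {x\<in>Es. red x}" "forest en {x\<in>Es. \<not> red x}"
    and "all_deleted_at_termination en Es red eadd" "finite S" "2 \<le> card S"
  shows "card {x\<in>Es - {eadd}. en x \<subseteq> S} \<le> 2 * card S - 3"
proof (rule ccontr)
  let ?F = "{x\<in>Es - {eadd}. en x \<subseteq> S}"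
  assume "\<not> card ?F \<le> 2 * card S - 3"
  then have dense: "2 * card S \<le> card ?F + 2" by linarith
  have red_forest: "forest en {f\<in>?F. red f}"
    by (rule forest_mono[OF forests(1)]) auto
  have black_forest: "forest en {f\<in>?F. \<not> red f}"
    by (rule forest_mono[OF forests(2)]) auto
  have finF: "finite ?F" using assms(1) by simp
  have "S \<noteq> {}" using assms(7) by auto
  have inS: "\<forall>f\<in>?F. en f \<subseteq> S" by simp
  have endsF: "\<forall>f\<in>?F. \<exists>u v. en f = {u, v}" using ends by simp
  have "balanced en red ?F"
    by (rule dense_forests_balanced[OF finF assms(6) \<open>S \<noteq> {}\<close> inS endsF red_forest
          black_forest dense])
  then have never: "deleted en Es red eadd n \<inter> ?F = {}" for n
    by (rule balanced_never_deleted) (auto simp: endsF)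
  have "card ?F \<noteq> 0" using dense assms(7) by linarith
  then obtain f where "f \<in> ?F" by (metis card.empty ex_in_conv)
  moreover obtain k where "deleted en Es red eadd k = Es"
    using assms(5) unfolding all_deleted_at_termination_def by blast
  ultimately show False using never[of k] by blast
qed

lemma spanning_tree_forest: "spanning_tree V en T \<Longrightarrow> forest en T"
  unfolding spanning_tree_def forest_def by blast

(* G* (edges of G as Some y, the copy e_add of e as None) is a finite loopless multigraph
   on V. *)
lemma doubled_graph:
  assumes "simple_graph V E" "e \<in> E"
  defines "en \<equiv> \<lambda>x. case x of None \<Rightarrow> e | Some y \<Rightarrow> y"
  shows "finite V" "finite (insert None (Some ` E))"
    and "\<forall>x\<in>insert None (Some ` E). \<exists>u v. u \<noteq> v \<and> en x = {u, v}"
    and "\<forall>x\<in>insert None (Some ` E). en x \<subseteq> V"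
proof -
  show finV: "finite V"
    using assms(1) unfolding simple_graph_def by simp
  have edges: "\<forall>x\<in>E. \<exists>u v. u \<in> V \<and> v \<in> V \<and> u \<noteq> v \<and> x = {u, v}"
    using assms(1) unfolding simple_graph_def by simp
  then have "E \<subseteq> Pow V" by auto
  then show "finite (insert None (Some ` E))" using finV by (simp add: finite_subset)
  show "\<forall>x\<in>insert None (Some ` E). \<exists>u v. u \<noteq> v \<and> en x = {u, v}"
    using edges assms(2) unfolding en_def by fastforce
  show "\<forall>x\<in>insert None (Some ` E). en x \<subseteq> V"
    using edges assms(2) unfolding en_def by fastforce
qed

lemma laman_iff_sparse:
  fixes V :: "'a set" and E :: "'a set set" and e :: "'a set"
  assumes "card E = 2 * card V - 3"
  defines "en \<equiv> \<lambda>x. case x of None \<Rightarrow> e | Some y \<Rightarrow> y"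
  shows "laman V E \<longleftrightarrow> (\<forall>P\<subseteq>V. 2 \<le> card P \<longrightarrow>
    card {x\<in>insert None (Some ` E) - {None}. en x \<subseteq> P} \<le> 2 * card P - 3)"
proof -
  have "{x\<in>insert None (Some ` E) - {None}. en x \<subseteq> P} = Some ` {y\<in>E. y \<subseteq> P}" for P
    unfolding en_def by auto
  then have "card {x\<in>insert None (Some ` E) - {None}. en x \<subseteq> P} = card {y\<in>E. y \<subseteq> P}" for P
    by (simp add: card_image)
  then show ?thesis unfolding laman_def using assms(1) by simp
qed

theorem mainTheorem2:
  fixes V :: "'a set" and E :: "'a set set" and e :: "'a set"
    and red :: "'a set option \<Rightarrow> bool"
  assumes "simple_graph V E"
    and "card V \<ge> 2"
    and "card E = 2 * card V - 3"
    and "e \<in> E"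
    and "spanning_tree V (\<lambda>x. case x of None \<Rightarrow> e | Some y \<Rightarrow> y)
           {x \<in> insert None (Some ` E). red x}"
    and "spanning_tree V (\<lambda>x. case x of None \<Rightarrow> e | Some y \<Rightarrow> y)
           {x \<in> insert None (Some ` E). \<not> red x}"
    and "\<not> red None"
  shows "laman V E \<longleftrightarrow>
    all_deleted_at_termination (\<lambda>x. case x of None \<Rightarrow> e | Some y \<Rightarrow> y)
      (insert None (Some ` E)) red None"
proof -
  let ?en = "\<lambda>x. case x of None \<Rightarrow> e | Some y \<Rightarrow> y" and ?Es = "insert None (Some ` E)"
  note G = doubled_graph[OF assms(1,4)]
  have red_spans: "\<forall>u\<in>V. \<forall>v\<in>V. conn ?en {x\<in>?Es. red x} u v"
    using assms(5) unfolding spanning_tree_def by simp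
  have ends: "\<forall>x\<in>?Es. \<exists>u v. ?en x = {u, v}"
    using G(3) by blast
  show ?thesis
    unfolding laman_iff_sparse[of E V e, OF assms(3)]
  proof
    assume "\<forall>P\<subseteq>V. 2 \<le> card P \<longrightarrow> card {x\<in>?Es - {None}. ?en x \<subseteq> P} \<le> 2 * card P - 3"
    then show "all_deleted_at_termination ?en ?Es red None"
      using sparse_imp_all_deleted[of V ?Es None red ?en] G assms(7) red_spans by simp
  next
    assume deleted: "all_deleted_at_termination ?en ?Es red None"
    show "\<forall>P\<subseteq>V. 2 \<le> card P \<longrightarrow> card {x\<in>?Es - {None}. ?en x \<subseteq> P} \<le> 2 * card P - 3"
    proof (intro allI impI)
      fix P assume "P \<subseteq> V" "2 \<le> card P"
      moreover have "finite P" using \<open>P \<subseteq> V\<close> G(1) finite_subset by blast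
      ultimately show "card {x\<in>?Es - {None}. ?en x \<subseteq> P} \<le> 2 * card P - 3"
        using all_deleted_imp_sparse[OF G(2) ends spanning_tree_forest[OF assms(5)]
            spanning_tree_forest[OF assms(6)] deleted] by blast
    qed
  qed
qed

end
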